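(* Let $X$ be a non-degenerate random variable with $E|X|<\infty$ and continuous cumulative distribution function, and suppose that the expectile function $\alpha\mapsto e_X(\alpha)$ is four times continuously differentiable on $(0,1)$. Then $s_2$ is differentiable on $(0,1/2)$ and $$\lim_{\alpha\to 1/2-} s_2'(\alpha) = 0 .$$
   Context: For a random variable $X$ with $E|X|<\infty$ and $\tau\in(0,1)$, the $\tau$-expectile $e_X(\tau)$ is the unique real number $t$ satisfying $\tau\, E(X-t)_+ = (1-\tau)\, E(X-t)_-$, where $x_+=\max\{x,0\}$ and $x_-=\max\{-x,0\}$; $e_X(1/2)=\mu=EX$. For $\alpha\in(0,1/2)$ the normalized expectile skewness is $$s_2(\alpha) = \frac{1}{1-2\alpha}\cdot\frac{e_X(1-\alpha)+e_X(\alpha)-2\mu}{e_X(1-\alpha)-e_X(\alpha)}.$$ *)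

theory Defs
  imports "HOL-Probability.Probability"
begin

definition expectile :: "'a measure \<Rightarrow> ('a \<Rightarrow> real) \<Rightarrow> real \<Rightarrow> real" where
  "expectile M X \<tau> = (THE t. \<tau> * (\<integral>\<omega>. max (X \<omega> - t) 0 \<partial>M)
                          = (1 - \<tau>) * (\<integral>\<omega>. max (- (X \<omega> - t)) 0 \<partial>M))"

definition expectile_skew2 :: "'a measure \<Rightarrow> ('a \<Rightarrow> real) \<Rightarrow> real \<Rightarrow> real" where
  "expectile_skew2 M X \<alpha> =
     (1 / (1 - 2 * \<alpha>)) *
     ((expectile M X (1 - \<alpha>) + expectile M X \<alpha> - 2 * (\<integral>\<omega>. X \<omega> \<partial>M))
      / (expectile M X (1 - \<alpha>) - expectile M X \<alpha>))"

end

theory Submission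
  imports Defs
begin

text \<open>
  Let \<open>L(t) = E(X - t)\<^sub>-\<close> be the lower partial moment. Since \<open>E(X - t)\<^sub>+ = L(t) + \<mu> - t\<close>,
  the expectile equation reads \<open>\<tau> (e(\<tau>) - \<mu>) = (2\<tau> - 1) L(e(\<tau>))\<close>; as \<open>L\<close> is increasing and
  1-Lipschitz it has exactly one root, and differentiating it at \<open>\<tau> = 1/2\<close> gives
  \<open>e'(1/2) = 4 L(\<mu>)\<close>, which is positive for non-degenerate \<open>X\<close>.

  With \<open>h = 1/2 - \<alpha>\<close>, the numerator \<open>N\<close> and the denominator \<open>D\<close> of \<open>s\<^sub>2\<close> are the even and the odd
  part of \<open>e(1/2 + h)\<close>, so by Taylor's theorem \<open>N = e''(1/2) h\<^sup>2 + O(h\<^sup>4)\<close> and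
  \<open>D = 2 e'(1/2) h + O(h\<^sup>3)\<close>, and similarly for their derivatives. In the quotient rule for
  \<open>s\<^sub>2 = N / (2 h D)\<close> the two terms of order \<open>1/h\<close> cancel, leaving \<open>s\<^sub>2'(\<alpha>) = O(h)\<close>.
\<close>

section \<open>Expectiles and the lower partial moment\<close>

definition lower_partial_moment :: "'a measure \<Rightarrow> ('a \<Rightarrow> real) \<Rightarrow> real \<Rightarrow> real" where
  "lower_partial_moment M X t = (\<integral>\<omega>. max (- (X \<omega> - t)) 0 \<partial>M)"

context prob_space
begin

lemma integrable_shifted_parts:
  fixes X :: "'a \<Rightarrow> real"
  assumes "integrable M X"
  shows "integrable M (\<lambda>\<omega>. max (X \<omega> - t) 0)" "integrable M (\<lambda>\<omega>. max (- (X \<omega> - t)) 0)"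
  using Bochner_Integration.integrable_max[of M "\<lambda>\<omega>. X \<omega> - t" "\<lambda>_. 0"]
    Bochner_Integration.integrable_max[of M "\<lambda>\<omega>. - (X \<omega> - t)" "\<lambda>_. 0"] assms
  by simp_all

lemma upper_minus_lower_partial_moment:
  fixes X :: "'a \<Rightarrow> real"
  assumes "integrable M X"
  shows "(\<integral>\<omega>. max (X \<omega> - t) 0 \<partial>M) - lower_partial_moment M X t = expectation X - t"
proof -
  have "(\<integral>\<omega>. max (X \<omega> - t) 0 \<partial>M) - lower_partial_moment M X t
      = (\<integral>\<omega>. max (X \<omega> - t) 0 - max (- (X \<omega> - t)) 0 \<partial>M)"
    using integrable_shifted_parts[OF assms] by (simp add: lower_partial_moment_def)
  also have "\<dots> = (\<integral>\<omega>. X \<omega> - t \<partial>M)"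
    by (rule Bochner_Integration.integral_cong) (auto split: split_max)
  also have "\<dots> = expectation X - t"
    using assms prob_space by simp
  finally show ?thesis .
qed

lemma lower_partial_moment_nonneg:
  fixes X :: "'a \<Rightarrow> real"
  shows "0 \<le> lower_partial_moment M X t"
  unfolding lower_partial_moment_def by (intro Bochner_Integration.integral_nonneg) auto

lemma lower_partial_moment_mono:
  fixes X :: "'a \<Rightarrow> real"
  assumes "integrable M X" "s \<le> t"
  shows "lower_partial_moment M X s \<le> lower_partial_moment M X t"
  unfolding lower_partial_moment_def
  using integrable_shifted_parts[OF assms(1)] assms(2)
  by (intro Bochner_Integration.integral_mono) auto

lemma lower_partial_moment_le_add:
  fixes X :: "'a \<Rightarrow> real"
  assumes "integrable M X" "s \<le> t"
  shows "lower_partial_moment M X t \<le> lower_partial_moment M X s + (t - s)"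
proof -
  have "lower_partial_moment M X t \<le> (\<integral>\<omega>. max (- (X \<omega> - s)) 0 + (t - s) \<partial>M)"
    unfolding lower_partial_moment_def
    using integrable_shifted_parts[OF assms(1)] assms(2)
    by (intro Bochner_Integration.integral_mono) auto
  also have "\<dots> = lower_partial_moment M X s + (t - s)"
    using integrable_shifted_parts[OF assms(1)] prob_space by (simp add: lower_partial_moment_def)
  finally show ?thesis .
qed

lemma continuous_lower_partial_moment:
  fixes X :: "'a \<Rightarrow> real"
  assumes "integrable M X"
  shows "continuous_on UNIV (lower_partial_moment M X)"
proof (rule lipschitz_on_continuous_on)
  show "1-lipschitz_on UNIV (lower_partial_moment M X)"
  proof (rule lipschitz_onI)
    fix s t :: real
    show "dist (lower_partial_moment M X s) (lower_partial_moment M X t) \<le> 1 * dist s t"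
      using lower_partial_moment_mono[OF assms] lower_partial_moment_le_add[OF assms]
      by (cases s t rule: le_cases) (fastforce simp: dist_real_def)+
  qed simp
qed

lemma expectile_equation_iff:
  fixes X :: "'a \<Rightarrow> real"
  assumes "integrable M X"
  shows "\<tau> * (\<integral>\<omega>. max (X \<omega> - t) 0 \<partial>M) = (1 - \<tau>) * (\<integral>\<omega>. max (- (X \<omega> - t)) 0 \<partial>M)
     \<longleftrightarrow> \<tau> * (t - expectation X) = (2 * \<tau> - 1) * lower_partial_moment M X t"
proof -
  have A: "(\<integral>\<omega>. max (X \<omega> - t) 0 \<partial>M) = lower_partial_moment M X t + expectation X - t"
    using upper_minus_lower_partial_moment[OF assms, of t] by simp
  have "\<tau> * (\<integral>\<omega>. max (X \<omega> - t) 0 \<partial>M) - (1 - \<tau>) * lower_partial_moment M X t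
    = (2 * \<tau> - 1) * lower_partial_moment M X t - \<tau> * (t - expectation X)"
    unfolding A by (simp add: algebra_simps)
  then show ?thesis
    unfolding lower_partial_moment_def[symmetric] by (intro iffI) linarith+
qed

lemma expectile_defect_growth:
  fixes X :: "'a \<Rightarrow> real"
  assumes "integrable M X" "0 < \<tau>" "\<tau> < 1" "s \<le> t"
  shows "min \<tau> (1 - \<tau>) * (t - s)
    \<le> (\<tau> * (t - expectation X) - (2 * \<tau> - 1) * lower_partial_moment M X t)
     - (\<tau> * (s - expectation X) - (2 * \<tau> - 1) * lower_partial_moment M X s)"
proof -
  let ?d = "lower_partial_moment M X t - lower_partial_moment M X s"
  have d: "0 \<le> ?d" "?d \<le> t - s"
    using lower_partial_moment_mono[OF assms(1,4)] lower_partial_moment_le_add[OF assms(1,4)]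
    by auto
  show ?thesis
  proof (cases "1/2 \<le> \<tau>")
    case True
    then have "(2 * \<tau> - 1) * ?d \<le> (2 * \<tau> - 1) * (t - s)" using d by (intro mult_left_mono) auto
    moreover have "min \<tau> (1 - \<tau>) * (t - s) \<le> (1 - \<tau>) * (t - s)"
      using assms(4) by (intro mult_right_mono) auto
    ultimately show ?thesis by (simp add: algebra_simps)
  next
    case False
    then have "(2 * \<tau> - 1) * ?d \<le> 0" using d by (intro mult_nonpos_nonneg) auto
    moreover have "min \<tau> (1 - \<tau>) * (t - s) \<le> \<tau> * (t - s)"
      using assms(4) by (intro mult_right_mono) auto
    ultimately show ?thesis by (simp add: algebra_simps)
  qed
qed

lemma ex1_expectile_equation:
  fixes X :: "'a \<Rightarrow> real"
  assumes "integrable M X" "0 < \<tau>" "\<tau> < 1"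
  shows "\<exists>!t. \<tau> * (t - expectation X) = (2 * \<tau> - 1) * lower_partial_moment M X t"
proof -
  define \<phi> where "\<phi> t = \<tau> * (t - expectation X) - (2 * \<tau> - 1) * lower_partial_moment M X t" for t
  define m where "m = min \<tau> (1 - \<tau>)"
  have m: "m > 0" using assms by (simp add: m_def)
  have growth: "m * (t - s) \<le> \<phi> t - \<phi> s" if "s \<le> t" for s t
    unfolding \<phi>_def m_def using expectile_defect_growth[OF assms that] .
  define K where "K = \<bar>\<phi> (expectation X)\<bar> / m + 1"
  have K: "K > 0" "m * K > \<bar>\<phi> (expectation X)\<bar>"
    using m by (auto simp: K_def field_simps intro: add_nonneg_pos)
  have "\<phi> (expectation X - K) < 0" "0 < \<phi> (expectation X + K)"
    using growth[of "expectation X - K" "expectation X"] growth[of "expectation X" "expectation X + K"] K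
    by auto
  moreover have "continuous_on UNIV \<phi>"
    unfolding \<phi>_def
    by (intro continuous_intros continuous_on_compose2[OF continuous_lower_partial_moment[OF assms(1)]]) auto
  ultimately obtain t where "\<phi> t = 0"
    using IVT'[of \<phi> "expectation X - K" 0 "expectation X + K"] K
      continuous_on_subset[of UNIV \<phi> "{expectation X - K..expectation X + K}"]
    by auto
  moreover have "s = t" if "\<phi> s = 0" "\<phi> t = 0" for s t
    using growth[of s t] growth[of t s] m that
    by (cases s t rule: linorder_cases) (auto simp: mult_le_0_iff)
  ultimately have "\<exists>!t. \<phi> t = 0" by blast
  then show ?thesis by (simp add: \<phi>_def)
qed

lemma expectile_equation:
  fixes X :: "'a \<Rightarrow> real"
  assumes "integrable M X" "0 < \<tau>" "\<tau> < 1"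
  shows "\<tau> * (expectile M X \<tau> - expectation X)
    = (2 * \<tau> - 1) * lower_partial_moment M X (expectile M X \<tau>)"
proof -
  have "expectile M X \<tau>
      = (THE t. \<tau> * (t - expectation X) = (2 * \<tau> - 1) * lower_partial_moment M X t)"
    unfolding expectile_def expectile_equation_iff[OF assms(1)] ..
  with theI'[OF ex1_expectile_equation[OF assms]] show ?thesis by simp
qed

lemma expectile_half:
  fixes X :: "'a \<Rightarrow> real"
  assumes "integrable M X"
  shows "expectile M X (1/2) = expectation X"
  using expectile_equation[OF assms, of "1/2"] by simp

lemma lower_partial_moment_mean_pos:
  fixes X :: "'a \<Rightarrow> real"
  assumes X: "integrable M X" and nondeg: "\<not> (\<exists>c. AE \<omega> in M. X \<omega> = c)"
  shows "0 < lower_partial_moment M X (expectation X)"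
proof (rule ccontr)
  define \<mu> where "\<mu> = expectation X"
  assume "\<not> 0 < lower_partial_moment M X (expectation X)"
  then have lower: "lower_partial_moment M X \<mu> = 0"
    using lower_partial_moment_nonneg[of X \<mu>] by (simp add: \<mu>_def)
  then have upper: "(\<integral>\<omega>. max (X \<omega> - \<mu>) 0 \<partial>M) = 0"
    using upper_minus_lower_partial_moment[OF X, of \<mu>] by (simp add: \<mu>_def)
  have "(\<integral>\<omega>. max (X \<omega> - \<mu>) 0 + max (- (X \<omega> - \<mu>)) 0 \<partial>M) = 0"
    using integrable_shifted_parts[OF X, of \<mu>] lower upper by (simp add: lower_partial_moment_def)
  moreover have "integrable M (\<lambda>\<omega>. max (X \<omega> - \<mu>) 0 + max (- (X \<omega> - \<mu>)) 0)"
    using integrable_shifted_parts[OF X, of \<mu>] by simp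
  ultimately have "AE \<omega> in M. max (X \<omega> - \<mu>) 0 + max (- (X \<omega> - \<mu>)) 0 = 0"
    by (subst (asm) integral_nonneg_eq_0_iff_AE) auto
  then have "AE \<omega> in M. X \<omega> = \<mu>"
    by eventually_elim (auto split: split_max)
  with nondeg show False by blast
qed

lemma expectile_less_mean:
  fixes X :: "'a \<Rightarrow> real"
  assumes X: "integrable M X" and nondeg: "\<not> (\<exists>c. AE \<omega> in M. X \<omega> = c)"
    and "0 < \<tau>" "\<tau> < 1/2"
  shows "expectile M X \<tau> < expectation X"
proof -
  let ?e = "expectile M X \<tau>"
  have eq: "\<tau> * (?e - expectation X) = (2 * \<tau> - 1) * lower_partial_moment M X ?e"
    using expectile_equation[OF X] assms(3,4) by simp
  have "(2 * \<tau> - 1) * lower_partial_moment M X ?e \<le> 0"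
    using assms(4) lower_partial_moment_nonneg[of X ?e] by (intro mult_nonpos_nonneg) auto
  with eq have "\<tau> * (?e - expectation X) \<le> 0" by simp
  with assms(3) have "?e \<le> expectation X" by (simp add: mult_le_0_iff)
  moreover have "?e \<noteq> expectation X"
    using eq assms(4) lower_partial_moment_mean_pos[OF X nondeg] by auto
  ultimately show ?thesis by simp
qed

lemma mean_le_expectile:
  fixes X :: "'a \<Rightarrow> real"
  assumes X: "integrable M X" and "1/2 \<le> \<tau>" "\<tau> < 1"
  shows "expectation X \<le> expectile M X \<tau>"
proof -
  let ?e = "expectile M X \<tau>"
  have eq: "\<tau> * (?e - expectation X) = (2 * \<tau> - 1) * lower_partial_moment M X ?e"
    using expectile_equation[OF X] assms(2,3) by simp
  have "0 \<le> (2 * \<tau> - 1) * lower_partial_moment M X ?e"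
    using assms(2) lower_partial_moment_nonneg[of X ?e] by simp
  with eq have "0 \<le> \<tau> * (?e - expectation X)" by simp
  with assms(2) show ?thesis by (simp add: zero_le_mult_iff)
qed

text \<open>Away from \<open>1/2\<close>, the expectile equation says that the difference quotient of the
  expectile function at \<open>1/2\<close> equals \<open>2 L(e(\<tau>)) / \<tau>\<close>.\<close>
lemma deriv_expectile_half:
  fixes X :: "'a \<Rightarrow> real"
  assumes X: "integrable M X" and d: "expectile M X differentiable (at (1/2))"
  shows "deriv (expectile M X) (1/2) = 4 * lower_partial_moment M X (expectation X)"
proof -
  define e where "e = expectile M X"
  define L where "L = lower_partial_moment M X"
  have e_half: "e (1/2) = expectation X"
    unfolding e_def by (rule expectile_half[OF X])
  have "(e has_real_derivative deriv e (1/2)) (at (1/2))"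
    using d unfolding e_def by (simp add: DERIV_deriv_iff_real_differentiable)
  then have quotient: "((\<lambda>\<tau>. (e \<tau> - e (1/2)) / (\<tau> - 1/2)) \<longlongrightarrow> deriv e (1/2)) (at (1/2))"
    by (simp add: has_field_derivative_iff)
  have "isCont e (1/2)"
    using d unfolding e_def by (simp add: differentiable_imp_continuous_within)
  moreover have "isCont L (e (1/2))"
    using continuous_lower_partial_moment[OF X] by (simp add: L_def continuous_on_eq_continuous_at)
  ultimately have "isCont (\<lambda>\<tau>. 2 * (L \<circ> e) \<tau> / \<tau>) (1/2)"
    by (intro continuous_intros) auto
  then have "((\<lambda>\<tau>. 2 * L (e \<tau>) / \<tau>) \<longlongrightarrow> 4 * L (expectation X)) (at (1/2))"
    by (simp add: isCont_def e_half)
  moreover have "\<forall>\<^sub>F \<tau> in at (1/2::real). \<tau> \<in> {0<..<1} - {1/2}"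
    by (rule eventually_at_in_open) auto
  then have "\<forall>\<^sub>F \<tau> in at (1/2). 2 * L (e \<tau>) / \<tau> = (e \<tau> - e (1/2)) / (\<tau> - 1/2)"
  proof eventually_elim
    case (elim \<tau>)
    then have "\<tau> * (e \<tau> - e (1/2)) = (2 * \<tau> - 1) * L (e \<tau>)"
      using expectile_equation[OF X] e_half by (auto simp: e_def L_def)
    with elim show ?case
      by (auto simp: field_simps)
  qed
  ultimately have "((\<lambda>\<tau>. (e \<tau> - e (1/2)) / (\<tau> - 1/2)) \<longlongrightarrow> 4 * L (expectation X)) (at (1/2))"
    by (rule Lim_transform_eventually)
  from tendsto_unique[OF _ quotient this] show ?thesis
    unfolding e_def L_def by simp
qed

end

section \<open>The skewness ratio near \<open>1/2\<close>\<close>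

lemma taylor_remainder_bound:
  fixes f :: "nat \<Rightarrow> real \<Rightarrow> real"
  assumes "0 < n"
    and "\<And>m t. m < n \<Longrightarrow> a \<le> t \<Longrightarrow> t \<le> b \<Longrightarrow> (f m has_real_derivative f (Suc m) t) (at t)"
    and bound: "\<And>t. a \<le> t \<Longrightarrow> t \<le> b \<Longrightarrow> \<bar>f n t\<bar> \<le> K"
    and "a \<le> c" "c \<le> b" "a \<le> x" "x \<le> b"
  shows "\<bar>f 0 x - (\<Sum>m<n. f m c / fact m * (x - c)^m)\<bar> \<le> K / fact n * \<bar>x - c\<bar>^n"
proof (cases "x = c")
  case True
  obtain k where "n = Suc k" using \<open>0 < n\<close> gr0_implies_Suc by blast
  then have "(\<Sum>m<n. f m c / fact m * (x - c)^m) = f 0 c"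
    using True by (simp add: sum.lessThan_Suc_shift del: sum.lessThan_Suc)
  moreover have "0 \<le> K" using bound[of c] assms(4,5) by linarith
  ultimately show ?thesis using True by simp
next
  case False
  obtain t where t: "if x < c then x < t \<and> t < c else c < t \<and> t < x"
    and taylor: "f 0 x = (\<Sum>m<n. f m c / fact m * (x - c)^m) + f n t / fact n * (x - c)^n"
    using Taylor[of n f "f 0" a b c x] assms False by force
  have "a \<le> t" "t \<le> b" using t assms(4-7) by (auto split: if_splits)
  have "\<bar>f 0 x - (\<Sum>m<n. f m c / fact m * (x - c)^m)\<bar> = \<bar>f n t\<bar> / fact n * \<bar>x - c\<bar>^n"
    using taylor by (simp add: abs_mult power_abs)
  also have "\<dots> \<le> K / fact n * \<bar>x - c\<bar>^n"
    using bound[OF \<open>a \<le> t\<close> \<open>t \<le> b\<close>] by (intro mult_right_mono divide_right_mono) auto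
  finally show ?thesis .
qed

lemma taylor_even_part_bound2:
  fixes f :: "nat \<Rightarrow> real \<Rightarrow> real"
  assumes derivs: "\<And>m t. m < 2 \<Longrightarrow> c - h \<le> t \<Longrightarrow> t \<le> c + h \<Longrightarrow> (f m has_real_derivative f (Suc m) t) (at t)"
    and bound: "\<And>t. c - h \<le> t \<Longrightarrow> t \<le> c + h \<Longrightarrow> \<bar>f 2 t\<bar> \<le> K"
    and "0 \<le> h"
  shows "\<bar>f 0 (c + h) + f 0 (c - h) - 2 * f 0 c\<bar> \<le> K * h^2"
proof -
  have "\<bar>f 0 (c + h) - (f 0 c + f 1 c * h)\<bar> \<le> K / 2 * h^2"
    "\<bar>f 0 (c - h) - (f 0 c - f 1 c * h)\<bar> \<le> K / 2 * h^2"
    using taylor_remainder_bound[where n=2 and a="c - h" and b="c + h" and c=c and x="c + h"]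
      taylor_remainder_bound[where n=2 and a="c - h" and b="c + h" and c=c and x="c - h"]
      derivs bound \<open>0 \<le> h\<close>
    by (auto simp: eval_nat_numeral)
  then show ?thesis
    unfolding abs_le_iff by linarith
qed

lemma taylor_odd_part_bound3:
  fixes f :: "nat \<Rightarrow> real \<Rightarrow> real"
  assumes derivs: "\<And>m t. m < 3 \<Longrightarrow> c - h \<le> t \<Longrightarrow> t \<le> c + h \<Longrightarrow> (f m has_real_derivative f (Suc m) t) (at t)"
    and bound: "\<And>t. c - h \<le> t \<Longrightarrow> t \<le> c + h \<Longrightarrow> \<bar>f 3 t\<bar> \<le> K"
    and "0 \<le> h"
  shows "\<bar>f 0 (c + h) - f 0 (c - h) - 2 * f 1 c * h\<bar> \<le> K / 3 * h^3"
proof -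
  have "\<bar>f 0 (c + h) - (f 0 c + f 1 c * h + f 2 c / 2 * h^2)\<bar> \<le> K / 6 * h^3"
    "\<bar>f 0 (c - h) - (f 0 c - f 1 c * h + f 2 c / 2 * h^2)\<bar> \<le> K / 6 * h^3"
    using taylor_remainder_bound[where n=3 and a="c - h" and b="c + h" and c=c and x="c + h"]
      taylor_remainder_bound[where n=3 and a="c - h" and b="c + h" and c=c and x="c - h"]
      derivs bound \<open>0 \<le> h\<close>
    by (auto simp: eval_nat_numeral)
  then show ?thesis
    unfolding abs_le_iff by linarith
qed

lemma taylor_even_part_bound4:
  fixes f :: "nat \<Rightarrow> real \<Rightarrow> real"
  assumes derivs: "\<And>m t. m < 4 \<Longrightarrow> c - h \<le> t \<Longrightarrow> t \<le> c + h \<Longrightarrow> (f m has_real_derivative f (Suc m) t) (at t)"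
    and bound: "\<And>t. c - h \<le> t \<Longrightarrow> t \<le> c + h \<Longrightarrow> \<bar>f 4 t\<bar> \<le> K"
    and "0 \<le> h"
  shows "\<bar>f 0 (c + h) + f 0 (c - h) - 2 * f 0 c - f 2 c * h^2\<bar> \<le> K / 12 * h^4"
proof -
  have "\<bar>f 0 (c + h) - (f 0 c + f 1 c * h + f 2 c / 2 * h^2 + f 3 c / 6 * h^3)\<bar> \<le> K / 24 * h^4"
    "\<bar>f 0 (c - h) - (f 0 c - f 1 c * h + f 2 c / 2 * h^2 - f 3 c / 6 * h^3)\<bar> \<le> K / 24 * h^4"
    using taylor_remainder_bound[where n=4 and a="c - h" and b="c + h" and c=c and x="c + h"]
      taylor_remainder_bound[where n=4 and a="c - h" and b="c + h" and c=c and x="c - h"]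
      derivs bound \<open>0 \<le> h\<close>
    by (auto simp: eval_nat_numeral)
  then show ?thesis
    unfolding abs_le_iff by linarith
qed

lemma symmetric_taylor_bounds:
  fixes e :: "real \<Rightarrow> real"
  assumes derivs: "\<And>m t. m < 4 \<Longrightarrow> c - h \<le> t \<Longrightarrow> t \<le> c + h \<Longrightarrow>
      ((deriv ^^ m) e has_real_derivative (deriv ^^ Suc m) e t) (at t)"
    and K3: "\<And>t. c - h \<le> t \<Longrightarrow> t \<le> c + h \<Longrightarrow> \<bar>(deriv ^^ 3) e t\<bar> \<le> K3"
    and K4: "\<And>t. c - h \<le> t \<Longrightarrow> t \<le> c + h \<Longrightarrow> \<bar>(deriv ^^ 4) e t\<bar> \<le> K4"
    and "0 \<le> h"
  shows "\<bar>e (c + h) + e (c - h) - 2 * e c - (deriv ^^ 2) e c * h^2\<bar> \<le> K4 / 12 * h^4"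
    and "\<bar>e (c + h) - e (c - h) - 2 * deriv e c * h\<bar> \<le> K3 / 3 * h^3"
    and "\<bar>(deriv e (c - h) - deriv e (c + h)) + 2 * (deriv ^^ 2) e c * h\<bar> \<le> K4 / 3 * h^3"
    and "\<bar>(- deriv e (c + h) - deriv e (c - h)) + 2 * deriv e c\<bar> \<le> K3 * h^2"
proof -
  have derivs_shift: "((deriv ^^ Suc m) e has_real_derivative (deriv ^^ Suc (Suc m)) e t) (at t)"
    if "m < 3" "c - h \<le> t" "t \<le> c + h" for m t
    using that by (intro derivs) auto
  show "\<bar>e (c + h) + e (c - h) - 2 * e c - (deriv ^^ 2) e c * h^2\<bar> \<le> K4 / 12 * h^4"
    using taylor_even_part_bound4[OF derivs K4 \<open>0 \<le> h\<close>] by simp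
  show "\<bar>e (c + h) - e (c - h) - 2 * deriv e c * h\<bar> \<le> K3 / 3 * h^3"
    using taylor_odd_part_bound3[OF derivs K3 \<open>0 \<le> h\<close>] by simp
  have "\<bar>deriv e (c + h) - deriv e (c - h) - 2 * (deriv ^^ 2) e c * h\<bar> \<le> K4 / 3 * h^3"
    using taylor_odd_part_bound3[where K=K4 and f="\<lambda>m. (deriv ^^ Suc m) e", OF derivs_shift]
      K4 \<open>0 \<le> h\<close>
    by (simp add: numeral_eq_Suc)
  then show "\<bar>(deriv e (c - h) - deriv e (c + h)) + 2 * (deriv ^^ 2) e c * h\<bar> \<le> K4 / 3 * h^3"
    unfolding abs_le_iff by linarith
  have "\<bar>deriv e (c + h) + deriv e (c - h) - 2 * deriv e c\<bar> \<le> K3 * h^2"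
    using taylor_even_part_bound2[where K=K3 and f="\<lambda>m. (deriv ^^ Suc m) e", OF derivs_shift]
      K3 \<open>0 \<le> h\<close>
    by (simp add: numeral_eq_Suc)
  then show "\<bar>(- deriv e (c + h) - deriv e (c - h)) + 2 * deriv e c\<bar> \<le> K3 * h^2"
    unfolding abs_le_iff by linarith
qed

definition skew_ratio :: "(real \<Rightarrow> real) \<Rightarrow> real \<Rightarrow> real \<Rightarrow> real" where
  "skew_ratio e \<mu> \<alpha> = 1 / (1 - 2 * \<alpha>) * ((e (1 - \<alpha>) + e \<alpha> - 2 * \<mu>) / (e (1 - \<alpha>) - e \<alpha>))"

lemma has_real_derivative_skew_ratio:
  assumes "(e has_real_derivative e' (1/2 - h)) (at (1/2 - h))"
    and "(e has_real_derivative e' (1/2 + h)) (at (1/2 + h))"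
    and "h \<noteq> 0" "e (1/2 + h) \<noteq> e (1/2 - h)"
  shows "(skew_ratio e \<mu> has_real_derivative
      2 / (2 * h)^2 * ((e (1/2 + h) + e (1/2 - h) - 2 * \<mu>) / (e (1/2 + h) - e (1/2 - h)))
      + 1 / (2 * h) * (((e' (1/2 - h) - e' (1/2 + h)) * (e (1/2 + h) - e (1/2 - h))
        - (e (1/2 + h) + e (1/2 - h) - 2 * \<mu>) * (- e' (1/2 + h) - e' (1/2 - h)))
        / (e (1/2 + h) - e (1/2 - h))^2)) (at (1/2 - h))"
proof -
  define \<alpha> where "\<alpha> = 1/2 - h"
  have \<alpha>: "1/2 - h = \<alpha>" "1/2 + h = 1 - \<alpha>" "2 * h = 1 - 2 * \<alpha>"
    by (simp_all add: \<alpha>_def)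
  have "((\<lambda>x. 1 - x) has_real_derivative -1) (at \<alpha>)"
    by (auto intro!: derivative_eq_intros)
  from DERIV_chain2[OF assms(2)[unfolded \<alpha>] this]
  have reflected: "((\<lambda>x. e (1 - x)) has_real_derivative - e' (1 - \<alpha>)) (at \<alpha>)"
    by simp
  have quotient: "((\<lambda>x. (e (1 - x) + e x - 2 * \<mu>) / (e (1 - x) - e x)) has_real_derivative
      ((e' \<alpha> - e' (1 - \<alpha>)) * (e (1 - \<alpha>) - e \<alpha>)
        - (e (1 - \<alpha>) + e \<alpha> - 2 * \<mu>) * (- e' (1 - \<alpha>) - e' \<alpha>)) / (e (1 - \<alpha>) - e \<alpha>)^2) (at \<alpha>)"
    using DERIV_divide[OF DERIV_diff[OF DERIV_add[OF reflected assms(1)[unfolded \<alpha>]] DERIV_const[of "2 * \<mu>"]]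
        DERIV_diff[OF reflected assms(1)[unfolded \<alpha>]]] assms(4)[unfolded \<alpha>]
    by (simp add: power2_eq_square algebra_simps)
  have factor: "((\<lambda>x. 1 / (1 - 2 * x)) has_real_derivative 2 / (1 - 2 * \<alpha>)^2) (at \<alpha>)"
    using assms(3) \<alpha>(3) by (auto intro!: derivative_eq_intros simp: power2_eq_square field_simps)
  from DERIV_mult[OF factor quotient] show ?thesis
    unfolding skew_ratio_def[abs_def] \<alpha> by (simp add: algebra_simps)
qed

lemma skew_ratio_differentiable:
  assumes "e differentiable (at \<alpha>)" "e differentiable (at (1 - \<alpha>))"
    and "\<alpha> \<noteq> 1/2" "e (1 - \<alpha>) \<noteq> e \<alpha>"
  shows "skew_ratio e \<mu> differentiable (at \<alpha>)"
  using has_real_derivative_skew_ratio[of e "deriv e" "1/2 - \<alpha>" \<mu>] assms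
  by (auto simp: DERIV_deriv_iff_real_differentiable real_differentiable_def)

text \<open>The terms of order \<open>h\<^sup>2\<close> cancel; this is what makes the limit of \<open>s\<^sub>2'\<close> vanish.\<close>
lemma skew_numerator_bound:
  fixes h e1 e2 N d N1 D1 A B C F G :: real
  assumes h: "0 < h"
    and N: "\<bar>N - e2 * h^2\<bar> \<le> A * h^4"
    and D: "\<bar>h * d - 2 * e1 * h\<bar> \<le> B * h^3"
    and N1: "\<bar>N1 + 2 * e2 * h\<bar> \<le> C * h^3"
    and D1: "\<bar>D1 + 2 * e1\<bar> \<le> F * h^2"
    and G: "\<bar>d - D1\<bar> \<le> G" and d: "\<bar>d\<bar> \<le> 3 * e1"
  shows "\<bar>N * (d - D1) + h * N1 * d\<bar> \<le> (\<bar>e2\<bar> * (B + F) + A * G + 3 * C * e1) * h^4"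
proof -
  have abs_mult_le: "\<bar>x * y\<bar> \<le> a * b" if "\<bar>x\<bar> \<le> a" "\<bar>y\<bar> \<le> b" for x y a b :: real
    unfolding abs_mult using that by (intro mult_mono') auto
  have abs_sum_le: "\<bar>- a - b + c + e\<bar> \<le> \<bar>a\<bar> + \<bar>b\<bar> + \<bar>c\<bar> + \<bar>e\<bar>" for a b c e :: real
    by arith
  have t1: "\<bar>(e2 * h) * (h * d - 2 * e1 * h)\<bar> \<le> (\<bar>e2\<bar> * h) * (B * h^3)"
    by (rule abs_mult_le[OF _ D]) (use h in \<open>simp add: abs_mult\<close>)
  have t2: "\<bar>(e2 * h^2) * (D1 + 2 * e1)\<bar> \<le> (\<bar>e2\<bar> * h^2) * (F * h^2)"
    by (rule abs_mult_le[OF _ D1]) (simp add: abs_mult)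
  have t3: "\<bar>(N - e2 * h^2) * (d - D1)\<bar> \<le> (A * h^4) * G"
    by (rule abs_mult_le[OF N G])
  have t4: "\<bar>(h * (N1 + 2 * e2 * h)) * d\<bar> \<le> (h * (C * h^3)) * (3 * e1)"
    by (rule abs_mult_le[OF _ d]) (use h N1 in \<open>simp add: abs_mult\<close>)
  have "N * (d - D1) + h * N1 * d
      = - (e2 * h * (h * d - 2 * e1 * h)) - e2 * h^2 * (D1 + 2 * e1)
        + (N - e2 * h^2) * (d - D1) + h * (N1 + 2 * e2 * h) * d"
    unfolding power2_eq_square by algebra
  also have "\<bar>\<dots>\<bar> \<le> (\<bar>e2\<bar> * h) * (B * h^3) + (\<bar>e2\<bar> * h^2) * (F * h^2)
      + (A * h^4) * G + (h * (C * h^3)) * (3 * e1)"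
    using abs_sum_le[of "e2 * h * (h * d - 2 * e1 * h)" "e2 * h^2 * (D1 + 2 * e1)"
        "(N - e2 * h^2) * (d - D1)" "h * (N1 + 2 * e2 * h) * d"] t1 t2 t3 t4
    by linarith
  also have "\<dots> = (\<bar>e2\<bar> * (B + F) + A * G + 3 * C * e1) * h^4"
    by (simp add: eval_nat_numeral algebra_simps)
  finally show ?thesis .
qed

lemma skew_deriv_bound:
  fixes h e1 e2 N D N1 D1 A B C F :: real
  assumes h: "0 < h" "h \<le> 1" and e1: "0 < e1"
    and N: "\<bar>N - e2 * h^2\<bar> \<le> A * h^4"
    and D: "\<bar>D - 2 * e1 * h\<bar> \<le> B * h^3"
    and N1: "\<bar>N1 + 2 * e2 * h\<bar> \<le> C * h^3"
    and D1: "\<bar>D1 + 2 * e1\<bar> \<le> F * h^2"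
    and small: "B * h^2 \<le> e1"
  shows "\<bar>2 / (2 * h)^2 * (N / D) + 1 / (2 * h) * ((N1 * D - N * D1) / D^2)\<bar>
    \<le> (\<bar>e2\<bar> * (B + F) + A * (5 * e1 + F) + 3 * C * e1) / (2 * e1^2) * h"
proof -
  have coeff_nonneg: "0 \<le> K" if "\<bar>x\<bar> \<le> K * h^n" for x K and n :: nat
  proof -
    have "0 \<le> K * h^n" using that abs_ge_zero order_trans by blast
    with zero_less_power[OF h(1), of n] show ?thesis by (simp add: zero_le_mult_iff)
  qed
  have "0 \<le> A" "0 \<le> C" "0 \<le> F"
    using coeff_nonneg N N1 D1 by blast+
  define d where "d = D / h"
  have D_eq: "D = h * d" using h by (simp add: d_def)
  have "D - 2 * e1 * h = h * (d - 2 * e1)" by (simp add: D_eq algebra_simps)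
  then have "\<bar>D - 2 * e1 * h\<bar> = h * \<bar>d - 2 * e1\<bar>" "B * h^3 = h * (B * h^2)"
    using h by (simp_all add: abs_mult eval_nat_numeral)
  with D have "h * \<bar>d - 2 * e1\<bar> \<le> h * (B * h^2)" by simp
  then have "\<bar>d - 2 * e1\<bar> \<le> B * h^2" using h by simp
  then have d: "e1 \<le> d" "\<bar>d\<bar> \<le> 3 * e1" using small e1 by (auto simp: abs_le_iff)
  have "F * h^2 \<le> F" using \<open>0 \<le> F\<close> h by (simp add: mult_left_le power_le_one)
  then have "\<bar>d - D1\<bar> \<le> 5 * e1 + F" using d D1 by (auto simp: abs_le_iff)
  define Q where "Q = \<bar>e2\<bar> * (B + F) + A * (5 * e1 + F) + 3 * C * e1"
  have num: "\<bar>N * (d - D1) + h * N1 * d\<bar> \<le> Q * h^4"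
    unfolding Q_def using D h
    by (intro skew_numerator_bound[OF h(1) N _ N1 D1 \<open>\<bar>d - D1\<bar> \<le> 5 * e1 + F\<close> d(2)])
      (simp add: D_eq)
  have "2 / (2 * h)^2 * (N / D) + 1 / (2 * h) * ((N1 * D - N * D1) / D^2)
      = (N * (d - D1) + h * N1 * d) / (2 * h^3 * d^2)"
    using h d e1 unfolding D_eq by (simp add: field_simps eval_nat_numeral)
  also have "\<bar>\<dots>\<bar> \<le> Q * h^4 / (2 * h^3 * e1^2)"
    unfolding abs_divide using num h d e1 \<open>0 \<le> A\<close> \<open>0 \<le> C\<close>
    by (intro frac_le mult_left_mono power_mono) auto
  also have "\<dots> = Q / (2 * e1^2) * h"
    using h e1 by (simp add: field_simps eval_nat_numeral)
  finally show ?thesis unfolding Q_def .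
qed

lemma eventually_deriv_skew_ratio_le:
  fixes e :: "real \<Rightarrow> real"
  assumes derivs: "\<And>m t. m < 4 \<Longrightarrow> 1/4 \<le> t \<Longrightarrow> t \<le> 3/4 \<Longrightarrow>
      ((deriv ^^ m) e has_real_derivative (deriv ^^ Suc m) e t) (at t)"
    and K3: "\<And>t. 1/4 \<le> t \<Longrightarrow> t \<le> 3/4 \<Longrightarrow> \<bar>(deriv ^^ 3) e t\<bar> \<le> K3"
    and K4: "\<And>t. 1/4 \<le> t \<Longrightarrow> t \<le> 3/4 \<Longrightarrow> \<bar>(deriv ^^ 4) e t\<bar> \<le> K4"
    and e_half: "e (1/2) = \<mu>" and e1: "0 < deriv e (1/2)"
    and mono: "\<And>\<alpha>. 1/4 \<le> \<alpha> \<Longrightarrow> \<alpha> < 1/2 \<Longrightarrow> e \<alpha> < e (1 - \<alpha>)"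
  shows "\<exists>Q. \<forall>\<^sub>F \<alpha> in at_left (1/2). \<bar>deriv (skew_ratio e \<mu>) \<alpha>\<bar> \<le> Q * (1/2 - \<alpha>)"
proof -
  define e1 e2 where "e1 = deriv e (1/2)" and "e2 = (deriv ^^ 2) e (1/2)"
  define \<delta> where "\<delta> = min (1/4) (e1 / (K3 / 3 + 1))"
  have "0 \<le> K3" using K3[of "1/2"] by simp
  then have "0 < \<delta>" using e1 by (simp add: \<delta>_def e1_def)
  define Q where "Q = (\<bar>e2\<bar> * (K3 / 3 + K3) + K4 / 12 * (5 * e1 + K3) + 3 * (K4 / 3) * e1) / (2 * e1^2)"
  have bound: "\<bar>deriv (skew_ratio e \<mu>) (1/2 - h)\<bar> \<le> Q * h" if h: "0 < h" "h < \<delta>" for h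
  proof -
    have "h \<le> 1/4" using h by (simp add: \<delta>_def)
    have derivs': "((deriv ^^ m) e has_real_derivative (deriv ^^ Suc m) e t) (at t)"
      if "m < 4" "1/2 - h \<le> t" "t \<le> 1/2 + h" for m t
      using derivs that \<open>h \<le> 1/4\<close> by auto
    have K3': "\<bar>(deriv ^^ 3) e t\<bar> \<le> K3" and K4': "\<bar>(deriv ^^ 4) e t\<bar> \<le> K4"
      if "1/2 - h \<le> t" "t \<le> 1/2 + h" for t
      using K3 K4 that \<open>h \<le> 1/4\<close> by auto
    note taylor = symmetric_taylor_bounds[where c="1/2" and h=h, OF derivs' K3' K4' less_imp_le[OF h(1)]]
    have "K3 / 3 * h^2 \<le> K3 / 3 * h"
      using \<open>0 \<le> K3\<close> h \<open>h \<le> 1/4\<close>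
      by (intro mult_left_mono) (auto simp: power2_eq_square mult_le_cancel_left1)
    also have "\<dots> \<le> (K3 / 3 + 1) * h"
      using h by (simp add: algebra_simps)
    also have "\<dots> \<le> e1"
      using h e1 \<open>0 \<le> K3\<close> by (simp add: \<delta>_def e1_def field_simps)
    finally have small: "K3 / 3 * h^2 \<le> e1" .
    have "(e has_real_derivative deriv e (1/2 - h)) (at (1/2 - h))"
      "(e has_real_derivative deriv e (1/2 + h)) (at (1/2 + h))"
      "h \<noteq> 0" "e (1/2 + h) \<noteq> e (1/2 - h)"
      using derivs[of 0] mono[of "1/2 - h"] \<open>h \<le> 1/4\<close> h by auto
    from DERIV_imp_deriv[OF has_real_derivative_skew_ratio[OF this]] show ?thesis
      using skew_deriv_bound[OF h(1) _ e1[folded e1_def] taylor[folded e1_def e2_def] small]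
        \<open>h \<le> 1/4\<close> e_half
      by (simp add: Q_def)
  qed
  have "\<forall>\<^sub>F \<alpha> in at_left (1/2::real). \<alpha> \<in> {1/2 - \<delta><..<1/2}"
    by (rule eventually_at_left_real) (use \<open>0 < \<delta>\<close> in simp)
  then have "\<forall>\<^sub>F \<alpha> in at_left (1/2). \<bar>deriv (skew_ratio e \<mu>) \<alpha>\<bar> \<le> Q * (1/2 - \<alpha>)"
  proof eventually_elim
    case (elim \<alpha>)
    with bound[of "1/2 - \<alpha>"] show ?case by simp
  qed
  then show ?thesis ..
qed

lemma deriv_skew_ratio_tendsto_0:
  fixes e :: "real \<Rightarrow> real"
  assumes diff: "\<forall>k<4. \<forall>a\<in>{0<..<1}. ((deriv ^^ k) e) differentiable (at a)"
    and cont4: "continuous_on {0<..<1} ((deriv ^^ 4) e)"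
    and "e (1/2) = \<mu>" "0 < deriv e (1/2)"
    and mono: "\<And>\<alpha>. 0 < \<alpha> \<Longrightarrow> \<alpha> < 1/2 \<Longrightarrow> e \<alpha> < e (1 - \<alpha>)"
  shows "(deriv (skew_ratio e \<mu>) \<longlongrightarrow> 0) (at_left (1/2))"
proof -
  have derivs: "((deriv ^^ m) e has_real_derivative (deriv ^^ Suc m) e t) (at t)"
    if "m < 4" "0 < t" "t < 1" for m t
    using diff that by (simp add: DERIV_deriv_iff_real_differentiable)
  have "continuous_on {1/4..3/4} ((deriv ^^ 3) e)"
    using diff by (intro continuous_at_imp_continuous_on ballI differentiable_imp_continuous_within) auto
  then obtain K3 where K3: "\<And>t. t \<in> {1/4..3/4} \<Longrightarrow> norm ((deriv ^^ 3) e t) \<le> K3"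
    using continuous_on_compact_bound[OF compact_Icc] by blast
  have "continuous_on {1/4..3/4} ((deriv ^^ 4) e)"
    by (rule continuous_on_subset[OF cont4]) auto
  then obtain K4 where K4: "\<And>t. t \<in> {1/4..3/4} \<Longrightarrow> norm ((deriv ^^ 4) e t) \<le> K4"
    using continuous_on_compact_bound[OF compact_Icc] by blast
  obtain Q where "\<forall>\<^sub>F \<alpha> in at_left (1/2). norm (deriv (skew_ratio e \<mu>) \<alpha>) \<le> Q * (1/2 - \<alpha>)"
    using eventually_deriv_skew_ratio_le[of e K3 K4 \<mu>] derivs K3 K4 assms(3-5) by force
  moreover have "((\<lambda>\<alpha>. Q * (1/2 - \<alpha>)) \<longlongrightarrow> Q * (1/2 - 1/2)) (at_left (1/2::real))"
    by (intro tendsto_intros)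
  ultimately show ?thesis
    by (rule Lim_null_comparison[OF _ tendsto_eq_rhs]) simp
qed

theorem mainTheorem4:
  fixes M :: "'a measure" and X :: "'a \<Rightarrow> real"
  assumes "prob_space M"
    and "X \<in> borel_measurable M"
    and "integrable M X"
    and nondeg: "\<not> (\<exists>c. AE \<omega> in M. X \<omega> = c)"
    and cdf_cont: "continuous_on UNIV (\<lambda>x. measure M {\<omega> \<in> space M. X \<omega> \<le> x})"
    and diff: "\<forall>k<4. \<forall>a\<in>{0<..<1}. ((deriv ^^ k) (expectile M X)) differentiable (at a)"
    and cont4: "continuous_on {0<..<1} ((deriv ^^ 4) (expectile M X))"
  shows "(\<forall>a\<in>{0<..<1/2}. expectile_skew2 M X differentiable (at a))
         \<and> (deriv (expectile_skew2 M X) \<longlongrightarrow> 0) (at_left (1/2))"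
proof -
  interpret prob_space M by fact
  let ?e = "expectile M X"
  have skew: "expectile_skew2 M X = skew_ratio ?e (expectation X)"
    by (simp add: fun_eq_iff expectile_skew2_def skew_ratio_def)
  have e_diff: "?e differentiable (at \<tau>)" if "0 < \<tau>" "\<tau> < 1" for \<tau>
    using diff that by (auto dest: spec[of _ 0])
  have spread: "?e \<alpha> < ?e (1 - \<alpha>)" if "0 < \<alpha>" "\<alpha> < 1/2" for \<alpha>
    using expectile_less_mean[OF assms(3) nondeg that] mean_le_expectile[OF assms(3), of "1 - \<alpha>"] that
    by simp
  have "0 < deriv ?e (1/2)"
    using deriv_expectile_half[OF assms(3) e_diff] lower_partial_moment_mean_pos[OF assms(3) nondeg]
    by simp
  with deriv_skew_ratio_tendsto_0[OF diff cont4 expectile_half[OF assms(3)] _ spread]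
  show ?thesis
    unfolding skew using e_diff spread
    by (force intro: skew_ratio_differentiable)
qed

end
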